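(* Let $P_n(x)=\sum_{k=0}^{n}\frac{(q^{-n},q^{n+2};q)_k\,(q(1+(q-1)x);q)_k\,q^k}{(q,q,q^2;q)_k}$ for $n\ge 0$ (the $q$-Hahn type family ${}_3\phi_2\!\left(q^{-n},q^{c+d+n+1},q(1+(q-1)x);q^{c+1},q^{d+1};q,q\right)$ with $c=0,d=1$). Then the sequence $(\beta_{n+1}/\beta_1)_{n\ge0}$ is the sequence of moments of the orthogonal polynomials $(P_n)_{n\ge0}$.
   Context: $q$ is an indeterminate; we work over $\mathbb{Q}(q)$. The $q$-Bernoulli–Carlitz numbers $\beta_n\in\mathbb{Q}(q)$ are defined by: for all $n\ge0$, $q\sum_{k=0}^{n}\binom{n}{k}q^k\beta_k-\beta_n$ equals $q-1$ if $n=0$, $1$ if $n=1$, and $0$ if $n>1$ (so $\beta_0=1$, $\beta_1=-1/(q+1)$). The $q$-Pochhammer symbol is $(a;q)_k=(1-a)(1-qa)\cdots(1-q^{k-1}a)$ and $(a_1,\dots,a_r;q)_k=\prod_i(a_i;q)_k$. A sequence $(m_n)_{n\ge0}$ with $m_0=1$ is called the sequence of moments of a family of polynomials $(P_n)_{n\ge0}$ ($\deg P_n=n$) if the linear functional $L$ on $\mathbb{Q}(q)[x]$ with $L(x^n)=m_n$ satisfies $L(P_mP_n)=0$ for $m\ne n$ and $L(P_n^2)\neq0$. *)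

theory Defs
  imports "HOL-Computational_Algebra.Polynomial" "HOL-Computational_Algebra.Fraction_Field"
begin

type_synonym Qq = "rat poly fract"

definition qq :: Qq where
  "qq = Fract [:0, 1:] 1"

text \<open>q-Bernoulli-Carlitz numbers: the unique sequence satisfying the defining relation.\<close>
definition beta_rhs :: "nat \<Rightarrow> Qq" where
  "beta_rhs n = (if n = 0 then qq - 1 else if n = 1 then 1 else 0)"

definition beta :: "nat \<Rightarrow> Qq" where
  "beta = (THE b. \<forall>n. qq * (\<Sum>k\<le>n. of_nat (n choose k) * qq ^ k * b k) - b n = beta_rhs n)"

definition qpoch :: "Qq \<Rightarrow> nat \<Rightarrow> Qq" where
  "qpoch a k = (\<Prod>i<k. 1 - qq ^ i * a)"

definition qpoch_x :: "nat \<Rightarrow> Qq poly" where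
  "qpoch_x k = (\<Prod>i<k. 1 - smult (qq ^ i * qq) [:1, qq - 1:])"

definition Pfam :: "nat \<Rightarrow> Qq poly" where
  "Pfam n = (\<Sum>k\<le>n. smult
      (qpoch (inverse qq ^ n) k * qpoch (qq ^ (n + 2)) k * qq ^ k
        / (qpoch qq k * qpoch qq k * qpoch (qq ^ 2) k))
      (qpoch_x k))"

definition moment_functional :: "(nat \<Rightarrow> 'a::field) \<Rightarrow> 'a poly \<Rightarrow> 'a" where
  "moment_functional m p = (\<Sum>i\<le>degree p. coeff p i * m i)"

definition is_moment_sequence :: "(nat \<Rightarrow> 'a::field) \<Rightarrow> (nat \<Rightarrow> 'a poly) \<Rightarrow> bool" where
  "is_moment_sequence m P \<longleftrightarrow>
     m 0 = 1 \<and> (\<forall>n. degree (P n) = n) \<and>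
     (\<forall>i j. i \<noteq> j \<longrightarrow> moment_functional m (P i * P j) = 0) \<and>
     (\<forall>n. moment_functional m (P n * P n) \<noteq> 0)"

end

theory Submission
  imports Defs
begin

text \<open>
  By its defining relation, the functional B with moments beta_n satisfies
  q B(f(1 + q x)) - B(f) = f'(0) + (q - 1) f(0). In the variable y = 1 + (q - 1) x the shift
  x |-> 1 + q x becomes the dilation y |-> q y, and the relation turns into B(D_q J) = J'(1) for the
  q-derivative D_q. Up to a constant, the functional with moments beta_(n+1) / beta_1 is
  h |-> B((1 - y) h). Feeding (y/q; q)_(k+2) g into the q-derivative identity gives a recurrence in k
  that evaluates this functional on (q y; q)_k g_j, where g_j = (q^(1-j) y; q)_j, in closed form.
  Pairing P_n with g_j then produces terminating sums
  sum_k (q^-n; q)_k / (q; q)_k q^k R(q^k); by the q-binomial theorem they vanish when deg R < n,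
  which is the case for j < n, while for j = n a partial-fraction evaluation shows that the sum is
  nonzero.
\<close>

section \<open>The indeterminate q and the Carlitz numbers\<close>

lemma qq_power: "qq ^ n = Fract (monom 1 n) 1"
  unfolding qq_def by (induction n) (auto simp: One_fract_def monom_Suc mult.commute)

lemma qq_power_eq_iff: "qq ^ m = qq ^ n \<longleftrightarrow> m = n"
  by (auto simp: qq_power eq_fract monom_eq_iff')

lemma qq_neq_0 [simp]: "qq \<noteq> 0"
  by (simp add: qq_def Zero_fract_def eq_fract)

lemma qq_power_eq_1_iff [simp]: "qq ^ n = 1 \<longleftrightarrow> n = 0"
  using qq_power_eq_iff[of n 0] by auto

lemma one_minus_qq_power_neq_0: "n \<noteq> 0 \<Longrightarrow> 1 - qq ^ n \<noteq> 0"
  by simp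

lemma qq_neq_1 [simp]: "qq \<noteq> 1" "1 - qq \<noteq> 0" "qq - 1 \<noteq> 0"
  using one_minus_qq_power_neq_0[of 1] by auto

function beta_rec :: "nat \<Rightarrow> Qq" where
  "beta_rec n =
     (beta_rhs n - qq * (\<Sum>k<n. of_nat (n choose k) * qq ^ k * beta_rec k)) / (qq ^ Suc n - 1)"
  by auto
termination by (relation "measure id") auto

declare beta_rec.simps [simp del]

lemma beta_relation_iff:
  "qq * (\<Sum>k\<le>n. of_nat (n choose k) * qq ^ k * b k) - b n = beta_rhs n \<longleftrightarrow>
   b n = (beta_rhs n - qq * (\<Sum>k<n. of_nat (n choose k) * qq ^ k * b k)) / (qq ^ Suc n - 1)"
proof -
  have "qq ^ Suc n - 1 \<noteq> 0"
    using one_minus_qq_power_neq_0[of "Suc n"] by auto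
  moreover have "(\<Sum>k\<le>n. of_nat (n choose k) * qq ^ k * b k)
      = (\<Sum>k<n. of_nat (n choose k) * qq ^ k * b k) + qq ^ n * b n"
    by (simp add: lessThan_Suc_atMost [symmetric])
  ultimately show ?thesis
    by (auto simp: field_simps)
qed

lemma beta_rec_relation:
  "qq * (\<Sum>k\<le>n. of_nat (n choose k) * qq ^ k * beta_rec k) - beta_rec n = beta_rhs n"
  by (subst beta_relation_iff) (rule beta_rec.simps)

lemma beta_relation_unique:
  assumes "\<forall>n. qq * (\<Sum>k\<le>n. of_nat (n choose k) * qq ^ k * b k) - b n = beta_rhs n"
  shows "b n = beta_rec n"
proof (induction n rule: less_induct)
  case (less n)
  have "b n = (beta_rhs n - qq * (\<Sum>k<n. of_nat (n choose k) * qq ^ k * b k)) / (qq ^ Suc n - 1)"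
    using assms beta_relation_iff by blast
  also have "(\<Sum>k<n. of_nat (n choose k) * qq ^ k * b k)
      = (\<Sum>k<n. of_nat (n choose k) * qq ^ k * beta_rec k)"
    using less by (intro sum.cong) auto
  finally show ?case
    by (subst beta_rec.simps)
qed

lemma beta_eq_beta_rec: "beta = beta_rec"
  unfolding beta_def by (rule the_equality) (use beta_rec_relation beta_relation_unique in auto)

lemma beta_relation: "qq * (\<Sum>k\<le>n. of_nat (n choose k) * qq ^ k * beta k) - beta n = beta_rhs n"
  by (simp add: beta_eq_beta_rec beta_rec_relation)

lemma beta_0: "beta 0 = 1"
proof -
  have "(qq - 1) * beta 0 = (qq - 1) * 1"
    using beta_relation[of 0] by (simp add: beta_rhs_def algebra_simps)
  then show ?thesis
    by simp
qed

lemma beta_1_neq_0: "beta 1 \<noteq> 0"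
proof
  assume "beta 1 = 0"
  then show False
    using beta_relation[of 1] by (simp add: beta_0 beta_rhs_def)
qed

section \<open>Moment functionals\<close>

lemma moment_functional_eq_sum:
  assumes "degree p < N"
  shows "moment_functional m p = (\<Sum>i<N. coeff p i * m i)"
  unfolding moment_functional_def
  by (rule sum.mono_neutral_left) (use assms in \<open>auto simp: coeff_eq_0\<close>)

lemma moment_functional_0 [simp]: "moment_functional m 0 = 0"
  by (simp add: moment_functional_def)

lemma moment_functional_add:
  "moment_functional m (p + r) = moment_functional m p + moment_functional m r"
proof -
  define N where "N = Suc (max (degree p) (degree r))"
  have "degree (p + r) < N" "degree p < N" "degree r < N"
    using degree_add_le_max[of p r] unfolding N_def by linarith+
  then show ?thesis
    by (simp add: moment_functional_eq_sum sum.distrib algebra_simps)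
qed

lemma moment_functional_smult: "moment_functional m (smult c p) = c * moment_functional m p"
  by (cases "c = 0") (simp_all add: moment_functional_def sum_distrib_left mult_ac)

lemma moment_functional_diff:
  "moment_functional m (p - r) = moment_functional m p - moment_functional m r"
  using moment_functional_add[of m p "-r"] moment_functional_smult[of m "-1" r] by simp

lemma moment_functional_sum:
  "moment_functional m (\<Sum>i\<in>A. f i) = (\<Sum>i\<in>A. moment_functional m (f i))"
  by (induction A rule: infinite_finite_induct) (auto simp: moment_functional_add)

lemma moment_functional_monom: "moment_functional m (monom c n) = c * m n"
  by (subst moment_functional_eq_sum[where N = "Suc n"]) (use degree_monom_le[of c n] in auto)

lemma moment_functional_pCons_0:
  "moment_functional m (pCons 0 p) = moment_functional (\<lambda>n. m (Suc n)) p"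
proof -
  have "degree (pCons 0 p) < Suc (Suc (degree p))"
    by (cases "p = 0") auto
  then have "moment_functional m (pCons 0 p) = (\<Sum>i<Suc (Suc (degree p)). coeff (pCons 0 p) i * m i)"
    by (rule moment_functional_eq_sum)
  also have "\<dots> = (\<Sum>i<Suc (degree p). coeff p i * m (Suc i))"
    by (subst sum.lessThan_Suc_shift) simp
  also have "\<dots> = moment_functional (\<lambda>n. m (Suc n)) p"
    by (rule moment_functional_eq_sum [symmetric]) simp
  finally show ?thesis .
qed

lemma moment_functional_divide:
  "moment_functional (\<lambda>n. m n / c) p = moment_functional m p / c"
  by (simp add: moment_functional_def sum_divide_distrib)

lemma power_linear_poly_expand:
  "[:1, a:] ^ n = (\<Sum>k\<le>n. monom (of_nat (n choose k) * a ^ k) k)"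
proof -
  have "[:1, a:] = monom a 1 + 1"
    by (simp add: monom_altdef one_pCons)
  then have "[:1, a:] ^ n = (\<Sum>k\<le>n. of_nat (n choose k) * monom a 1 ^ k * 1 ^ (n - k))"
    by (simp add: binomial_ring)
  also have "\<dots> = (\<Sum>k\<le>n. monom (of_nat (n choose k) * a ^ k) k)"
    by (intro sum.cong refl)
      (simp add: monom_power of_nat_poly smult_monom [symmetric] flip: smult_conv_map_poly)
  finally show ?thesis .
qed

abbreviation Beta :: "Qq poly \<Rightarrow> Qq" where
  "Beta \<equiv> moment_functional beta"

lemma Beta_functional_equation:
  "qq * Beta (pcompose f [:1, qq:]) - Beta f = coeff f 1 + (qq - 1) * coeff f 0"
proof -
  have monom: "qq * Beta (pcompose (monom c n) [:1, qq:]) - Beta (monom c n)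
      = coeff (monom c n) 1 + (qq - 1) * coeff (monom c n) 0" for c n
  proof -
    have "pcompose (monom c n) [:1, qq:] = smult c ([:1, qq:] ^ n)"
      by (simp add: pcompose_altdef map_poly_monom poly_monom smult_conv_map_poly)
    then have "qq * Beta (pcompose (monom c n) [:1, qq:]) - Beta (monom c n)
        = c * (qq * (\<Sum>k\<le>n. of_nat (n choose k) * qq ^ k * beta k) - beta n)"
      by (simp add: power_linear_poly_expand moment_functional_smult moment_functional_sum
          moment_functional_monom algebra_simps)
    also have "\<dots> = c * beta_rhs n"
      by (simp add: beta_relation)
    finally show ?thesis
      by (auto simp: beta_rhs_def coeff_monom)
  qed
  define M where "M i = monom (coeff f i) i" for i
  have f: "f = (\<Sum>i\<le>degree f. M i)"
    by (simp add: M_def poly_as_sum_of_monoms)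
  have "qq * Beta (pcompose f [:1, qq:]) - Beta f
      = (\<Sum>i\<le>degree f. qq * Beta (pcompose (M i) [:1, qq:]) - Beta (M i))"
    by (subst (1 2) f) (simp add: pcompose_sum moment_functional_sum sum_distrib_left sum_subtractf)
  also have "\<dots> = (\<Sum>i\<le>degree f. coeff (M i) 1 + (qq - 1) * coeff (M i) 0)"
    by (simp add: monom M_def)
  also have "\<dots> = coeff f 1 + (qq - 1) * coeff f 0"
    using arg_cong[OF f, of "\<lambda>p. coeff p 1"] arg_cong[OF f, of "\<lambda>p. coeff p 0"]
    by (simp add: coeff_sum sum.distrib sum_distrib_left)
  finally show ?thesis .
qed

section \<open>The functional in the variable y\<close>

(* y = 1 + (q - 1) x conjugates the shift x |-> 1 + q x to the dilation y |-> q y. *)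
definition ysubst :: "Qq poly" where
  "ysubst = [:1, qq - 1:]"

definition Beta_y :: "Qq poly \<Rightarrow> Qq" where
  "Beta_y g = Beta (pcompose g ysubst)"

lemma Beta_y_add: "Beta_y (p + r) = Beta_y p + Beta_y r"
  by (simp add: Beta_y_def pcompose_add moment_functional_add)

lemma Beta_y_diff: "Beta_y (p - r) = Beta_y p - Beta_y r"
  by (simp add: Beta_y_def pcompose_diff moment_functional_diff)

lemma Beta_y_smult: "Beta_y (smult c p) = c * Beta_y p"
  by (simp add: Beta_y_def pcompose_smult moment_functional_smult)

lemma Beta_y_sum: "Beta_y (\<Sum>i\<in>A. f i) = (\<Sum>i\<in>A. Beta_y (f i))"
  by (simp add: Beta_y_def pcompose_sum moment_functional_sum)

lemma Beta_y_functional_equation: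
  "Beta_y g - qq * Beta_y (pcompose g [:0, qq:]) = (1 - qq) * (poly g 1 + poly (pderiv g) 1)"
proof -
  have "pcompose ysubst [:1, qq:] = pcompose [:0, qq:] ysubst"
    by (simp add: ysubst_def pcompose_pCons algebra_simps)
  then have "pcompose (pcompose g ysubst) [:1, qq:] = pcompose (pcompose g [:0, qq:]) ysubst"
    by (metis pcompose_assoc)
  moreover have "coeff (pcompose g ysubst) 0 = poly g 1"
    by (simp flip: poly_0_coeff_0 add: poly_pcompose ysubst_def)
  moreover have "coeff (pcompose g ysubst) 1 = (qq - 1) * poly (pderiv g) 1"
    using coeff_pderiv[of "pcompose g ysubst" 0]
    by (simp flip: poly_0_coeff_0 add: pderiv_pcompose poly_pcompose ysubst_def pderiv_pCons)
  ultimately show ?thesis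
    using Beta_functional_equation[of "pcompose g ysubst"]
    by (simp add: Beta_y_def algebra_simps)
qed

(* (p(y) - p(q y)) / ((1 - q) y); the division by y is exact. *)
definition qderiv :: "Qq poly \<Rightarrow> Qq poly" where
  "qderiv p = smult (inverse (1 - qq)) ((p - pcompose p [:0, qq:]) div [:0, 1:])"

lemma x_times_div_x: "poly p 0 = 0 \<Longrightarrow> [:0, 1:] * (p div [:0, 1:]) = p"
  using poly_eq_0_iff_dvd[of p 0] by (metis dvd_mult_div_cancel minus_zero)

lemma x_times_qderiv: "[:0, 1:] * smult (1 - qq) (qderiv p) = p - pcompose p [:0, qq:]"
  using x_times_div_x[of "p - pcompose p [:0, qq:]"] by (simp add: qderiv_def poly_pcompose)

lemma qderiv_eqI: "[:0, 1:] * smult (1 - qq) r = p - pcompose p [:0, qq:] \<Longrightarrow> qderiv p = r"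
  using x_times_qderiv[of p]
  by (metis mult_left_cancel pCons_eq_0_iff one_neq_zero smult_cancel qq_neq_1(2))

lemma qderiv_1 [simp]: "qderiv 1 = 0"
  by (rule qderiv_eqI) (simp add: pcompose_1)

lemma qderiv_mult: "qderiv (p * r) = qderiv p * r + pcompose p [:0, qq:] * qderiv r"
proof (rule qderiv_eqI)
  have "[:0, 1:] * smult (1 - qq) (qderiv p * r + pcompose p [:0, qq:] * qderiv r)
      = ([:0, 1:] * smult (1 - qq) (qderiv p)) * r
        + pcompose p [:0, qq:] * ([:0, 1:] * smult (1 - qq) (qderiv r))"
    by (simp add: algebra_simps smult_add_right)
  also have "\<dots> = p * r - pcompose (p * r) [:0, qq:]"
    by (simp only: x_times_qderiv pcompose_mult) (simp add: algebra_simps)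
  finally show "[:0, 1:] * smult (1 - qq) (qderiv p * r + pcompose p [:0, qq:] * qderiv r)
      = p * r - pcompose (p * r) [:0, qq:]" .
qed

lemma Beta_y_qderiv: "Beta_y (qderiv p) = poly (pderiv p) 1"
proof -
  obtain c r where p: "p = pCons c r"
    by (cases p)
  have "[:0, 1:] * smult (1 - qq) (qderiv p) = p - pcompose p [:0, qq:]"
    by (rule x_times_qderiv)
  also have "\<dots> = [:0, 1:] * (r - smult qq (pcompose r [:0, qq:]))"
    by (simp add: p pcompose_pCons algebra_simps)
  finally have "smult (1 - qq) (qderiv p) = r - smult qq (pcompose r [:0, qq:])"
    by (metis mult_left_cancel pCons_eq_0_iff one_neq_zero)
  then have "(1 - qq) * Beta_y (qderiv p) = (1 - qq) * (poly r 1 + poly (pderiv r) 1)"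
    by (metis Beta_y_diff Beta_y_smult Beta_y_functional_equation)
  moreover have "poly (pderiv p) 1 = poly r 1 + poly (pderiv r) 1"
    by (simp add: p pderiv_pCons)
  ultimately show ?thesis
    by simp
qed

section \<open>q-Pochhammer symbols and polynomials\<close>

lemma qpoch_0 [simp]: "qpoch a 0 = 1"
  by (simp add: qpoch_def)

lemma qpoch_Suc: "qpoch a (Suc k) = qpoch a k * (1 - qq ^ k * a)"
  by (simp add: qpoch_def)

lemma qpoch_Suc': "qpoch a (Suc k) = (1 - a) * qpoch (qq * a) k"
  unfolding qpoch_def by (subst prod.lessThan_Suc_shift) (simp add: mult_ac)

lemma qpoch_add: "qpoch a (m + n) = qpoch a m * qpoch (qq ^ m * a) n"
  by (induction n) (auto simp: qpoch_def algebra_simps power_add)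

lemma qpoch_neq_0: "(\<And>i. i < k \<Longrightarrow> qq ^ i * a \<noteq> 1) \<Longrightarrow> qpoch a k \<noteq> 0"
  by (auto simp: qpoch_def)

lemma qpoch_qq_power_neq_0: "m \<noteq> 0 \<Longrightarrow> qpoch (qq ^ m) k \<noteq> 0"
  by (rule qpoch_neq_0) (use qq_power_eq_iff[of _ 0] in \<open>auto simp flip: power_add\<close>)

lemma qpoch_qq_neq_0: "qpoch qq k \<noteq> 0"
  using qpoch_qq_power_neq_0[of 1 k] by simp

lemma qpoch_qq_power_exchange:
  "qpoch (qq ^ (n + m)) k * qpoch (qq ^ m) n = qpoch (qq ^ m) k * qpoch (qq ^ (k + m)) n"
  using qpoch_add[of "qq ^ m" n k] qpoch_add[of "qq ^ m" k n]
  by (simp add: power_add add.commute mult.commute)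

definition qpoch_poly :: "Qq \<Rightarrow> nat \<Rightarrow> Qq poly" where
  "qpoch_poly a k = (\<Prod>i<k. [:1, - (qq ^ i * a):])"

lemma qpoch_poly_0 [simp]: "qpoch_poly a 0 = 1"
  by (simp add: qpoch_poly_def)

lemma qpoch_poly_Suc: "qpoch_poly a (Suc k) = qpoch_poly a k * [:1, - (qq ^ k * a):]"
  by (simp add: qpoch_poly_def)

lemma qpoch_poly_Suc': "qpoch_poly a (Suc k) = [:1, - a:] * qpoch_poly (qq * a) k"
  unfolding qpoch_poly_def by (subst prod.lessThan_Suc_shift) (simp add: mult_ac)

lemma poly_qpoch_poly: "poly (qpoch_poly a k) z = qpoch (a * z) k"
  by (simp add: qpoch_poly_def qpoch_def poly_prod mult_ac)

lemma pcompose_qpoch_poly: "pcompose (qpoch_poly a k) [:0, qq:] = qpoch_poly (qq * a) k"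
  by (simp add: qpoch_poly_def pcompose_prod pcompose_pCons algebra_simps)

lemma degree_qpoch_poly_le: "degree (qpoch_poly a k) \<le> k"
  unfolding qpoch_poly_def
  by (rule order.trans[OF degree_prod_sum_le])
    (auto intro: order.trans[OF sum_mono[of _ _ "\<lambda>_. 1"]])

lemma lead_coeff_qpoch_poly_neq_0: "a \<noteq> 0 \<Longrightarrow> lead_coeff (qpoch_poly a k) \<noteq> 0"
  by (simp add: qpoch_poly_def lead_coeff_prod)

lemma degree_qpoch_poly: "a \<noteq> 0 \<Longrightarrow> degree (qpoch_poly a k) = k"
  by (simp add: qpoch_poly_def degree_prod_eq_sum_degree)

lemma qderiv_qpoch_poly:
  "qderiv (qpoch_poly a (Suc k)) = smult (- a * (1 - qq ^ Suc k) / (1 - qq)) (qpoch_poly (qq * a) k)"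
proof (rule qderiv_eqI)
  define r where "r = qpoch_poly (qq * a) k"
  have "pcompose (qpoch_poly a (Suc k)) [:0, qq:] = r * [:1, - (qq ^ k * (qq * a)):]"
    unfolding r_def pcompose_qpoch_poly by (rule qpoch_poly_Suc)
  moreover have "qpoch_poly a (Suc k) = [:1, - a:] * r"
    unfolding r_def by (rule qpoch_poly_Suc')
  ultimately have "qpoch_poly a (Suc k) - pcompose (qpoch_poly a (Suc k)) [:0, qq:]
      = r * ([:1, - a:] - [:1, - (qq ^ k * (qq * a)):])"
    by (simp only: right_diff_distrib mult.commute)
  also have "\<dots> = pCons 0 (smult (- a * (1 - qq ^ Suc k)) r)"
    by (simp add: algebra_simps)
  also have "\<dots> = [:0, 1:] * smult (1 - qq) (smult (- a * (1 - qq ^ Suc k) / (1 - qq)) r)"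
    by simp
  finally show "[:0, 1:] * smult (1 - qq) (smult (- a * (1 - qq ^ Suc k) / (1 - qq)) r)
      = qpoch_poly a (Suc k) - pcompose (qpoch_poly a (Suc k)) [:0, qq:]" ..
qed

section \<open>The shifted functional\<close>

definition Beta_shift :: "Qq poly \<Rightarrow> Qq" where
  "Beta_shift h = Beta_y ([:1, -1:] * h)"

lemma Beta_shift_add: "Beta_shift (p + r) = Beta_shift p + Beta_shift r"
  by (simp add: Beta_shift_def distrib_left Beta_y_add)

lemma Beta_shift_smult: "Beta_shift (smult c p) = c * Beta_shift p"
  by (simp add: Beta_shift_def Beta_y_smult)

lemma Beta_shift_sum: "Beta_shift (\<Sum>i\<in>A. f i) = (\<Sum>i\<in>A. Beta_shift (f i))"
  by (simp add: Beta_shift_def sum_distrib_left Beta_y_sum)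

(* In x-coordinates, 1 - y = (1 - q) x. *)
lemma moment_functional_beta_shift:
  "moment_functional (\<lambda>n. beta (n + 1) / beta 1) (pcompose h ysubst)
     = Beta_shift h / ((1 - qq) * beta 1)"
proof -
  have "pcompose [:1, -1:] ysubst = [:0, 1 - qq:]"
    by (simp add: ysubst_def pcompose_pCons)
  then have "pcompose ([:1, -1:] * h) ysubst = smult (1 - qq) (pCons 0 (pcompose h ysubst))"
    by (simp only: pcompose_mult) simp
  then have "Beta_shift h = (1 - qq) * moment_functional (\<lambda>n. beta (n + 1)) (pcompose h ysubst)"
    by (simp add: Beta_shift_def Beta_y_def moment_functional_smult moment_functional_pCons_0)
  then show ?thesis
    by (simp add: moment_functional_divide)
qed

definition Beta_poch :: "nat \<Rightarrow> Qq poly \<Rightarrow> Qq" where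
  "Beta_poch k g = Beta_shift (qpoch_poly qq k * g)"

lemma Beta_poch_smult: "Beta_poch k (smult c g) = c * Beta_poch k g"
  by (simp add: Beta_poch_def Beta_shift_def Beta_y_smult mult_smult_right)

lemma Beta_poch_eq: "Beta_poch k g = Beta_y (qpoch_poly 1 (Suc k) * g)"
  unfolding Beta_poch_def Beta_shift_def qpoch_poly_Suc' by (simp only: mult.assoc mult_1_right)

lemma Beta_poch_0 [simp]: "Beta_poch k 0 = 0"
  by (simp add: Beta_poch_def Beta_shift_def Beta_y_def)

(* Beta_y_qderiv applied to F g, where F = (y/q; q)_(k+2) vanishes at y = 1. *)
lemma Beta_poch_recurrence:
  "(1 - qq ^ Suc (Suc k)) * Beta_poch k g
     = (1 - qq) * (qq * Beta_poch (Suc k) (qderiv g) - (1 - qq) * qpoch qq k * poly g 1)"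
proof -
  define F where "F = qpoch_poly (inverse qq) (Suc (Suc k))"
  define c where "c = - inverse qq * (1 - qq ^ Suc (Suc k)) / (1 - qq)"
  have "qderiv F = smult c (qpoch_poly 1 (Suc k))"
    unfolding F_def c_def qderiv_qpoch_poly by simp
  moreover have "pcompose F [:0, qq:] = qpoch_poly 1 (Suc (Suc k))"
    unfolding F_def pcompose_qpoch_poly by simp
  ultimately have "Beta_y (qderiv (F * g)) = c * Beta_poch k g + Beta_poch (Suc k) (qderiv g)"
    by (simp add: qderiv_mult Beta_y_add Beta_y_smult Beta_poch_eq mult.assoc)
  moreover have "poly F 1 = 0"
    unfolding F_def poly_qpoch_poly qpoch_def by (rule prod_zero) (auto intro!: bexI[where x = 1])
  moreover have "F = [:1, - inverse qq:] * ([:1, -1:] * qpoch_poly qq k)"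
    unfolding F_def qpoch_poly_Suc' by simp
  then have "poly (pderiv F) 1 = (inverse qq - 1) * qpoch qq k"
    by (simp only: pderiv_mult poly_add poly_mult) (simp add: pderiv_pCons poly_qpoch_poly algebra_simps)
  ultimately have key: "c * Beta_poch k g + Beta_poch (Suc k) (qderiv g)
      = (inverse qq - 1) * qpoch qq k * poly g 1"
    by (simp add: Beta_y_qderiv pderiv_mult mult_ac)
  have "(1 - qq ^ Suc (Suc k)) * Beta_poch k g = - qq * (1 - qq) * (c * Beta_poch k g)"
    by (simp add: c_def field_simps)
  also have "c * Beta_poch k g = (inverse qq - 1) * qpoch qq k * poly g 1 - Beta_poch (Suc k) (qderiv g)"
    using key by (simp add: algebra_simps)
  also have "- qq * (1 - qq) * \<dots>
      = (1 - qq) * (qq * Beta_poch (Suc k) (qderiv g) - (1 - qq) * qpoch qq k * poly g 1)"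
    by (simp add: field_simps)
  finally show ?thesis .
qed

(* Since (q^(1-j) y; q)_j vanishes at y = 1 for j > 0, the boundary term of the recurrence drops out. *)
definition gbasis :: "nat \<Rightarrow> Qq poly" where
  "gbasis j = qpoch_poly (qq / qq ^ j) j"

lemma gbasis_0 [simp]: "gbasis 0 = 1"
  by (simp add: gbasis_def)

lemma degree_gbasis: "degree (gbasis j) = j"
  by (simp add: gbasis_def degree_qpoch_poly)

lemma lead_coeff_gbasis_neq_0: "lead_coeff (gbasis j) \<noteq> 0"
  unfolding gbasis_def by (rule lead_coeff_qpoch_poly_neq_0) simp

lemma gbasis_neq_0: "gbasis j \<noteq> 0"
  using lead_coeff_gbasis_neq_0 by fastforce

lemma poly_gbasis_Suc_1: "poly (gbasis (Suc j)) 1 = 0"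
  unfolding gbasis_def poly_qpoch_poly qpoch_def
  by (rule prod_zero) (auto intro!: bexI[where x = j] simp: field_simps)

lemma qderiv_gbasis_Suc:
  "qderiv (gbasis (Suc j)) = smult (- (1 - qq ^ Suc j) / (qq ^ j * (1 - qq))) (gbasis j)"
proof -
  have "qq * (qq / qq ^ Suc j) = qq / qq ^ j"
    by simp
  moreover have "- (qq / qq ^ Suc j) * (1 - qq ^ Suc j) / (1 - qq)
      = - (1 - qq ^ Suc j) / (qq ^ j * (1 - qq))"
    by (simp add: field_simps)
  ultimately show ?thesis
    unfolding gbasis_def qderiv_qpoch_poly by (simp only:)
qed

fun gbasis_const :: "nat \<Rightarrow> Qq" where
  "gbasis_const 0 = - ((1 - qq) * (1 - qq))"
| "gbasis_const (Suc j) = - (qq / qq ^ j) * (1 - qq ^ Suc j) * gbasis_const j"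

lemma gbasis_const_neq_0: "gbasis_const j \<noteq> 0"
  by (induction j) (auto simp del: power_Suc)

lemma Beta_poch_gbasis:
  "Beta_poch k (gbasis j) = gbasis_const j * qpoch qq (k + j) / qpoch (qq ^ (k + 2)) (Suc j)"
proof (induction j arbitrary: k)
  case 0
  have "(1 - qq ^ Suc (Suc k)) * Beta_poch k 1 = - ((1 - qq) * (1 - qq)) * qpoch qq k"
    using Beta_poch_recurrence[of k 1] by simp
  moreover have "1 - qq ^ Suc (Suc k) \<noteq> 0"
    by (rule one_minus_qq_power_neq_0) simp
  ultimately show ?case
    by (simp add: qpoch_def field_simps)
next
  case (Suc j)
  define d where "d = - (1 - qq ^ Suc j) / (qq ^ j * (1 - qq))"
  define u where "u = 1 - qq ^ Suc (Suc k)"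
  define P where "P = qpoch (qq ^ (Suc k + 2)) (Suc j)"
  define Q where "Q = qpoch qq (k + Suc j)"
  have u: "u \<noteq> 0"
    unfolding u_def by (rule one_minus_qq_power_neq_0) simp
  have P: "P \<noteq> 0"
    unfolding P_def by (rule qpoch_qq_power_neq_0) simp
  have "Beta_poch (Suc k) (gbasis j) = gbasis_const j * Q / P"
    unfolding P_def Q_def Suc.IH by simp
  then have "u * Beta_poch k (gbasis (Suc j)) = (1 - qq) * (qq * (d * (gbasis_const j * Q / P)))"
    unfolding u_def Beta_poch_recurrence poly_gbasis_Suc_1 qderiv_gbasis_Suc Beta_poch_smult d_def by simp
  then have "Beta_poch k (gbasis (Suc j)) = (1 - qq) * (qq * (d * (gbasis_const j * Q / P))) / u"
    using u by (metis nonzero_mult_div_cancel_left)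
  also have "\<dots> = gbasis_const (Suc j) * Q / (u * P)"
    using u P by (simp add: d_def field_simps)
  also have "u * P = qpoch (qq ^ (k + 2)) (Suc (Suc j))"
    unfolding u_def P_def by (subst qpoch_Suc') simp
  finally show ?case
    unfolding Q_def .
qed

section \<open>Terminating q-binomial sums\<close>

(* (q^-n; q)_k / (q; q)_k = (-1)^k q^(k(k-1)/2 - n k) [n, k]_q. *)
definition qbinom :: "nat \<Rightarrow> nat \<Rightarrow> Qq" where
  "qbinom n k = qpoch (inverse qq ^ n) k / qpoch qq k"

lemma qbinom_0 [simp]: "qbinom n 0 = 1"
  by (simp add: qbinom_def)

lemma qbinom_eq_0: "n < k \<Longrightarrow> qbinom n k = 0"
  unfolding qbinom_def qpoch_def
  by (subst prod_zero) (auto intro!: bexI[where x = n] simp: field_simps)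

lemma qbinom_Suc_Suc: "qbinom (Suc n) (Suc i) = qbinom n (Suc i) - inverse qq ^ Suc n * qbinom n i"
proof -
  define c where "c = inverse qq ^ Suc n"
  have a: "inverse qq ^ n = qq * c"
    by (simp add: c_def)
  have e1: "qbinom (Suc n) (Suc i) = (1 - c) * qpoch (qq * c) i / (qpoch qq i * (1 - qq ^ i * qq))"
    by (simp only: qbinom_def c_def qpoch_Suc'[of "inverse qq ^ Suc n"] qpoch_Suc[of qq])
  have e2: "qbinom n (Suc i)
      = qpoch (qq * c) i * (1 - qq ^ i * (qq * c)) / (qpoch qq i * (1 - qq ^ i * qq))"
    by (simp only: qbinom_def qpoch_Suc a)
  have e3: "qbinom n i = qpoch (qq * c) i / qpoch qq i"
    by (simp only: qbinom_def a)
  have "qpoch qq i \<noteq> 0" "1 - qq ^ i * qq \<noteq> 0"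
    using qpoch_qq_neq_0 one_minus_qq_power_neq_0[of "Suc i"] by (simp_all add: mult.commute)
  then show ?thesis
    unfolding c_def [symmetric] e1 e2 e3 by (simp add: field_simps)
qed

lemma qbinomial_theorem: "(\<Sum>k\<le>n. qbinom n k * z ^ k) = qpoch (inverse qq ^ n * z) n"
proof (induction n)
  case 0
  then show ?case
    by simp
next
  case (Suc n)
  define S where "S = (\<Sum>k\<le>n. qbinom n k * z ^ k)"
  have "(\<Sum>k\<le>Suc n. qbinom (Suc n) k * z ^ k)
      = 1 + (\<Sum>i\<le>n. qbinom (Suc n) (Suc i) * z ^ Suc i)"
    by (subst sum.atMost_Suc_shift) simp
  also have "\<dots> = (1 + (\<Sum>i\<le>n. qbinom n (Suc i) * z ^ Suc i)) - inverse qq ^ Suc n * z * S"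
    unfolding qbinom_Suc_Suc S_def by (simp add: algebra_simps sum_subtractf sum_distrib_left)
  also have "1 + (\<Sum>i\<le>n. qbinom n (Suc i) * z ^ Suc i) = (\<Sum>k\<le>Suc n. qbinom n k * z ^ k)"
    by (subst sum.atMost_Suc_shift) simp
  also have "\<dots> = S"
    by (simp add: S_def qbinom_eq_0)
  also have "S - inverse qq ^ Suc n * z * S = (1 - inverse qq ^ Suc n * z) * qpoch (inverse qq ^ n * z) n"
    unfolding S_def Suc.IH by (simp add: algebra_simps)
  also have "\<dots> = qpoch (inverse qq ^ Suc n * z) (Suc n)"
    unfolding qpoch_Suc' by (simp add: mult.assoc [symmetric])
  finally show ?case .
qed

lemma qbinom_sum_poly_eq_0:
  assumes "R = 0 \<or> degree R < n"
  shows "(\<Sum>k\<le>n. qbinom n k * qq ^ k * poly R (qq ^ k)) = 0"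
proof -
  have "(\<Sum>k\<le>n. qbinom n k * qq ^ k * poly R (qq ^ k))
      = (\<Sum>m\<le>degree R. coeff R m * (\<Sum>k\<le>n. qbinom n k * (qq ^ Suc m) ^ k))"
    unfolding poly_altdef sum_distrib_left
    by (subst sum.swap, intro sum.cong refl)
      (simp add: power_mult_distrib power_mult [symmetric] mult_ac power_add [symmetric])
  also have "\<dots> = 0"
  proof (intro sum.neutral ballI)
    fix m
    assume "m \<in> {..degree R}"
    then have m: "m < n \<or> R = 0"
      using assms by auto
    have "coeff R m = 0 \<or> qpoch (inverse qq ^ n * qq ^ Suc m) n = 0"
    proof (cases "R = 0")
      case False
      with m have "m < n"
        by simp
      then have "qq ^ (n - Suc m) * qq ^ Suc m = qq ^ n"
        by (subst power_add [symmetric]) simp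
      then have "qq ^ (n - Suc m) * (inverse qq ^ n * qq ^ Suc m) = 1"
        by (simp add: field_simps)
      then show ?thesis
        unfolding qpoch_def using \<open>m < n\<close>
        by (auto intro!: prod_zero bexI[where x = "n - Suc m"])
    qed simp
    then show "coeff R m * (\<Sum>k\<le>n. qbinom n k * (qq ^ Suc m) ^ k) = 0"
      by (auto simp: qbinomial_theorem)
  qed
  finally show ?thesis .
qed

lemma qbinom_sum_partial_fractions:
  assumes "\<And>k. k \<le> n \<Longrightarrow> b * qq ^ k \<noteq> 1"
  shows "(\<Sum>k\<le>n. qbinom n k * qq ^ k / (1 - b * qq ^ k)) = qpoch qq n * b ^ n / qpoch b (Suc n)"
  using assms
proof (induction n arbitrary: b)
  case 0
  then show ?case
    by (simp add: qpoch_def)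
next
  case (Suc n)
  define W where "W b = (\<Sum>k\<le>n. qbinom n k * qq ^ k / (1 - b * qq ^ k))" for b
  have "(\<Sum>k\<le>Suc n. qbinom (Suc n) k * qq ^ k / (1 - b * qq ^ k))
      = 1 / (1 - b) + (\<Sum>i\<le>n. qbinom (Suc n) (Suc i) * qq ^ Suc i / (1 - b * qq ^ Suc i))"
    by (subst sum.atMost_Suc_shift) simp
  also have "\<dots> = (1 / (1 - b) + (\<Sum>i\<le>n. qbinom n (Suc i) * qq ^ Suc i / (1 - b * qq ^ Suc i)))
      - inverse qq ^ Suc n * qq * W (qq * b)"
    unfolding qbinom_Suc_Suc W_def
    by (simp add: algebra_simps sum_subtractf sum_distrib_left diff_divide_distrib)
  also have "1 / (1 - b) + (\<Sum>i\<le>n. qbinom n (Suc i) * qq ^ Suc i / (1 - b * qq ^ Suc i))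
      = (\<Sum>k\<le>Suc n. qbinom n k * qq ^ k / (1 - b * qq ^ k))"
    by (subst sum.atMost_Suc_shift) simp
  also have "\<dots> = W b"
    by (simp add: W_def qbinom_eq_0)
  also have "W b = qpoch qq n * b ^ n / qpoch b (Suc n)"
    unfolding W_def by (rule Suc.IH) (use Suc.prems in auto)
  also have "W (qq * b) = qpoch qq n * (qq * b) ^ n / qpoch (qq * b) (Suc n)"
    unfolding W_def by (rule Suc.IH) (use Suc.prems[of "Suc _"] in \<open>auto simp: mult_ac\<close>)
  also have "qpoch qq n * b ^ n / qpoch b (Suc n)
      - inverse qq ^ Suc n * qq * (qpoch qq n * (qq * b) ^ n / qpoch (qq * b) (Suc n))
      = qpoch qq (Suc n) * b ^ Suc n / qpoch b (Suc (Suc n))"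
  proof -
    define R u v w where "R = qpoch (qq * b) n" and "u = 1 - b"
      and "v = 1 - qq ^ n * (qq * b)" and "w = 1 - qq ^ n * qq"
    have nz: "R \<noteq> 0" "u \<noteq> 0" "v \<noteq> 0"
      unfolding R_def u_def v_def
      by (rule qpoch_neq_0, use Suc.prems[of "Suc _"] in \<open>auto simp: mult_ac\<close>)
        (use Suc.prems[of 0] Suc.prems[of "Suc n"] in \<open>auto simp: mult_ac\<close>)
    have X: "qpoch b (Suc n) = u * R" and Z: "qpoch b (Suc (Suc n)) = u * (R * v)"
      unfolding R_def u_def v_def qpoch_Suc'[of b] qpoch_Suc[of "qq * b" n] by (rule refl)+
    have Y: "qpoch (qq * b) (Suc n) = R * v" and Q: "qpoch qq (Suc n) = qpoch qq n * w"
      unfolding R_def v_def w_def qpoch_Suc by (rule refl)+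
    have "inverse qq ^ Suc n * qq * (qpoch qq n * (qq * b) ^ n / qpoch (qq * b) (Suc n))
        = qpoch qq n * b ^ n / (R * v)"
      unfolding Y by (simp add: power_mult_distrib field_simps)
    then have "qpoch qq n * b ^ n / qpoch b (Suc n)
        - inverse qq ^ Suc n * qq * (qpoch qq n * (qq * b) ^ n / qpoch (qq * b) (Suc n))
        = qpoch qq n * b ^ n / (u * R) - qpoch qq n * b ^ n / (R * v)"
      unfolding X by simp
    also have "\<dots> = qpoch qq n * b ^ n * (v - u) / (u * (R * v))"
      using nz by (simp add: field_simps)
    also have "v - u = b * w"
      by (simp add: u_def v_def w_def algebra_simps)
    also have "qpoch qq n * b ^ n * (b * w) / (u * (R * v))
        = qpoch qq (Suc n) * b ^ Suc n / qpoch b (Suc (Suc n))"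
      unfolding Q Z by (simp add: mult_ac)
    finally show ?thesis .
  qed
  finally show ?case .
qed

(* Divide A by z - 1/b: the quotient contributes nothing by qbinom_sum_poly_eq_0, and the
   remainder A(1/b) multiplies a sum evaluated by partial fractions. *)
lemma qbinom_sum_poly_partial_fractions:
  assumes "degree A \<le> n" and "b \<noteq> 0" and "\<And>k. k \<le> n \<Longrightarrow> b * qq ^ k \<noteq> 1"
  shows "(\<Sum>k\<le>n. qbinom n k * qq ^ k * poly A (qq ^ k) / (1 - b * qq ^ k))
    = poly A (inverse b) * (qpoch qq n * b ^ n / qpoch b (Suc n))"
proof -
  define c where "c = inverse b"
  define D where "D = synthetic_div A c"
  have "D = 0 \<or> degree D < n"
    using assms(1) by (cases n) (auto simp: D_def degree_synthetic_div synthetic_div_eq_0_iff)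
  then have D: "(\<Sum>k\<le>n. qbinom n k * qq ^ k * poly D (qq ^ k)) = 0"
    by (rule qbinom_sum_poly_eq_0)
  have "qbinom n k * qq ^ k * poly A (qq ^ k) / (1 - b * qq ^ k)
      = - c * (qbinom n k * qq ^ k * poly D (qq ^ k))
        + poly A c * (qbinom n k * qq ^ k / (1 - b * qq ^ k))" if "k \<le> n" for k
  proof -
    have "poly A (qq ^ k) = (qq ^ k - c) * poly D (qq ^ k) + poly A c"
      using arg_cong[OF synthetic_div_correct'[where p = A and c = c], of "\<lambda>p. poly p (qq ^ k)"]
      by (simp add: D_def algebra_simps)
    also have "qq ^ k - c = - c * (1 - b * qq ^ k)"
      using assms(2) by (simp add: c_def field_simps)
    finally have A: "poly A (qq ^ k) = - c * (1 - b * qq ^ k) * poly D (qq ^ k) + poly A c" .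
    show ?thesis
      unfolding A using assms(3)[OF that] by (simp add: field_simps)
  qed
  then have "(\<Sum>k\<le>n. qbinom n k * qq ^ k * poly A (qq ^ k) / (1 - b * qq ^ k))
      = (\<Sum>k\<le>n. - c * (qbinom n k * qq ^ k * poly D (qq ^ k))
          + poly A c * (qbinom n k * qq ^ k / (1 - b * qq ^ k)))"
    by (intro sum.cong refl) simp
  also have "\<dots> = - c * (\<Sum>k\<le>n. qbinom n k * qq ^ k * poly D (qq ^ k))
      + poly A c * (\<Sum>k\<le>n. qbinom n k * qq ^ k / (1 - b * qq ^ k))"
    by (simp only: sum.distrib flip: sum_distrib_left)
  also have "(\<Sum>k\<le>n. qbinom n k * qq ^ k / (1 - b * qq ^ k)) = qpoch qq n * b ^ n / qpoch b (Suc n)"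
    using assms(3) by (rule qbinom_sum_partial_fractions)
  finally show ?thesis
    by (simp add: D c_def)
qed

section \<open>Orthogonality\<close>

definition Pcoeff :: "nat \<Rightarrow> nat \<Rightarrow> Qq" where
  "Pcoeff n k = qpoch (inverse qq ^ n) k * qpoch (qq ^ (n + 2)) k * qq ^ k
     / (qpoch qq k * qpoch qq k * qpoch (qq ^ 2) k)"

definition Py :: "nat \<Rightarrow> Qq poly" where
  "Py n = (\<Sum>k\<le>n. smult (Pcoeff n k) (qpoch_poly qq k))"

lemma Pfam_eq: "Pfam n = pcompose (Py n) ysubst"
proof -
  have "qpoch_x k = pcompose (qpoch_poly qq k) ysubst" for k
    unfolding qpoch_x_def qpoch_poly_def pcompose_prod
    by (intro prod.cong refl) (simp add: pcompose_pCons ysubst_def algebra_simps one_pCons)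
  then show ?thesis
    unfolding Pfam_def Py_def pcompose_sum pcompose_smult Pcoeff_def by simp
qed

lemma degree_Py: "degree (Py n) = n"
  and lead_coeff_Py_neq_0: "lead_coeff (Py n) \<noteq> 0"
proof -
  have "degree (Py n) \<le> n"
    unfolding Py_def
    by (intro degree_sum_le order.trans[OF degree_smult_le])
      (auto intro: order.trans[OF degree_qpoch_poly_le])
  have "Pcoeff n n \<noteq> 0"
  proof -
    have "qpoch (inverse qq ^ n) n \<noteq> 0"
    proof (rule qpoch_neq_0)
      fix i
      assume "i < n"
      then have "qq ^ i \<noteq> qq ^ n"
        by (simp add: qq_power_eq_iff)
      then show "qq ^ i * inverse qq ^ n \<noteq> 1"
        by (simp add: power_inverse flip: divide_inverse)
    qed
    then show ?thesis
      using qpoch_qq_power_neq_0[of "n + 2" n] qpoch_qq_power_neq_0[of 2 n] qpoch_qq_neq_0[of n]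
      by (simp add: Pcoeff_def)
  qed
  moreover have "coeff (Py n) n = Pcoeff n n * lead_coeff (qpoch_poly qq n)"
    unfolding Py_def coeff_sum
    by (subst sum.remove[of _ n]) (auto intro!: sum.neutral simp: coeff_eq_0 degree_qpoch_poly)
  ultimately have "coeff (Py n) n \<noteq> 0"
    using lead_coeff_qpoch_poly_neq_0[of qq n] by simp
  with \<open>degree (Py n) \<le> n\<close> show "degree (Py n) = n"
    by (simp add: le_antisym le_degree)
  with \<open>coeff (Py n) n \<noteq> 0\<close> show "lead_coeff (Py n) \<noteq> 0"
    by simp
qed

lemma Pcoeff_mult_qpoch:
  "Pcoeff n k * qpoch qq (k + j) * qpoch (qq ^ 2) n
     = qbinom n k * qq ^ k * qpoch (qq ^ (k + 1)) j * qpoch (qq ^ (k + 2)) n"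
proof -
  have "qpoch qq (k + j) = qpoch qq k * qpoch (qq ^ (k + 1)) j"
    by (simp add: qpoch_add mult.commute)
  moreover have "qpoch (qq ^ (n + 2)) k * qpoch (qq ^ 2) n = qpoch (qq ^ 2) k * qpoch (qq ^ (k + 2)) n"
    by (rule qpoch_qq_power_exchange)
  moreover have "qpoch qq k \<noteq> 0" "qpoch (qq ^ 2) k \<noteq> 0"
    by (simp_all add: qpoch_qq_neq_0 qpoch_qq_power_neq_0)
  ultimately show ?thesis
    unfolding Pcoeff_def qbinom_def by (simp add: field_simps)
qed

lemma Beta_shift_Py_mult: "Beta_shift (Py n * g) = (\<Sum>k\<le>n. Pcoeff n k * Beta_poch k g)"
  unfolding Py_def sum_distrib_right Beta_shift_sum Beta_poch_def
  by (simp add: mult_smult_left Beta_shift_smult)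

lemma Beta_shift_Py_gbasis:
  "qpoch (qq ^ 2) n * Beta_shift (Py n * gbasis j) = gbasis_const j *
     (\<Sum>k\<le>n. qbinom n k * qq ^ k * qpoch (qq ^ (k + 1)) j * qpoch (qq ^ (k + 2)) n
        / qpoch (qq ^ (k + 2)) (Suc j))"
proof -
  have "qpoch (qq ^ 2) n * (Pcoeff n k * Beta_poch k (gbasis j))
      = gbasis_const j * (Pcoeff n k * qpoch qq (k + j) * qpoch (qq ^ 2) n)
        / qpoch (qq ^ (k + 2)) (Suc j)" for k
    by (simp add: Beta_poch_gbasis mult_ac)
  then show ?thesis
    unfolding Beta_shift_Py_mult Pcoeff_mult_qpoch sum_distrib_left by (simp add: mult.assoc)
qed

lemma Beta_shift_Py_gbasis_eq_0:
  assumes "j < n"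
  shows "Beta_shift (Py n * gbasis j) = 0"
proof -
  define R where "R = qpoch_poly qq j * qpoch_poly (qq ^ (j + 3)) (n - Suc j)"
  have "degree R \<le> j + (n - Suc j)"
    unfolding R_def by (intro degree_mult_le[THEN order.trans] add_mono degree_qpoch_poly_le)
  with assms have "degree R < n"
    by linarith
  have "qbinom n k * qq ^ k * qpoch (qq ^ (k + 1)) j * qpoch (qq ^ (k + 2)) n / qpoch (qq ^ (k + 2)) (Suc j)
      = qbinom n k * qq ^ k * poly R (qq ^ k)" for k
  proof -
    have "qpoch (qq ^ (k + 2)) n = qpoch (qq ^ (k + 2)) (Suc j + (n - Suc j))"
      using assms by simp
    also have "\<dots> = qpoch (qq ^ (k + 2)) (Suc j) * qpoch (qq ^ (j + 3) * qq ^ k) (n - Suc j)"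
      unfolding qpoch_add by (simp add: power_add power3_eq_cube mult_ac)
    finally have split: "qpoch (qq ^ (k + 2)) n
        = qpoch (qq ^ (k + 2)) (Suc j) * qpoch (qq ^ (j + 3) * qq ^ k) (n - Suc j)" .
    have "poly R (qq ^ k) = qpoch (qq ^ (k + 1)) j * qpoch (qq ^ (j + 3) * qq ^ k) (n - Suc j)"
      unfolding R_def poly_mult poly_qpoch_poly by simp
    then show ?thesis
      unfolding split using qpoch_qq_power_neq_0[of "k + 2" "Suc j"] by (simp add: field_simps)
  qed
  then have "qpoch (qq ^ 2) n * Beta_shift (Py n * gbasis j) = 0"
    unfolding Beta_shift_Py_gbasis using qbinom_sum_poly_eq_0[of R n] \<open>degree R < n\<close>
    by simp
  then show ?thesis
    using qpoch_qq_power_neq_0[of 2 n] by simp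
qed

lemma Beta_shift_Py_gbasis_neq_0: "Beta_shift (Py n * gbasis n) \<noteq> 0"
proof -
  define b where "b = qq ^ (n + 2)"
  have b: "b * qq ^ k \<noteq> 1" for k
  proof -
    have "b * qq ^ k = qq ^ (n + 2 + k)"
      by (simp add: b_def power_add)
    then show ?thesis
      by (simp only: qq_power_eq_1_iff)
  qed
  have "qbinom n k * qq ^ k * qpoch (qq ^ (k + 1)) n * qpoch (qq ^ (k + 2)) n / qpoch (qq ^ (k + 2)) (Suc n)
      = qbinom n k * qq ^ k * poly (qpoch_poly qq n) (qq ^ k) / (1 - b * qq ^ k)" for k
  proof -
    have "qpoch (qq ^ (k + 2)) (Suc n) = qpoch (qq ^ (k + 2)) n * (1 - b * qq ^ k)"
      by (simp add: qpoch_Suc b_def power_add mult_ac)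
    then show ?thesis
      using qpoch_qq_power_neq_0[of "k + 2" n] by (simp add: poly_qpoch_poly mult_ac)
  qed
  then have "qpoch (qq ^ 2) n * Beta_shift (Py n * gbasis n)
      = gbasis_const n * (poly (qpoch_poly qq n) (inverse b) * (qpoch qq n * b ^ n / qpoch b (Suc n)))"
    unfolding Beta_shift_Py_gbasis
    using qbinom_sum_poly_partial_fractions[of "qpoch_poly qq n" n b] b
    by (simp add: degree_qpoch_poly b_def)
  moreover have "poly (qpoch_poly qq n) (inverse b) \<noteq> 0"
    unfolding poly_qpoch_poly
  proof (rule qpoch_neq_0)
    fix i
    assume "i < n"
    then have "qq ^ i \<noteq> qq ^ Suc n"
      using qq_power_eq_iff[of i "Suc n"] by simp
    then show "qq ^ i * (qq * inverse b) \<noteq> 1"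
      by (simp add: b_def field_simps)
  qed
  ultimately show ?thesis
    using gbasis_const_neq_0[of n] qpoch_qq_neq_0[of n] qpoch_qq_power_neq_0[of "n + 2" "Suc n"]
    by (auto simp: b_def)
qed

lemma degree_cancel_lead_coeff:
  fixes g h :: "'a::field poly"
  assumes "degree g \<le> degree h" and "h \<noteq> 0"
  defines "r \<equiv> g - smult (coeff g (degree h) / lead_coeff h) h"
  shows "r = 0 \<or> degree r < degree h"
proof -
  have "degree r \<le> degree h"
    unfolding r_def using assms(1) by (intro degree_diff_le) auto
  moreover have "coeff r (degree h) = 0"
    unfolding r_def using assms(2) by simp
  ultimately show ?thesis
    by (metis le_neq_implies_less leading_coeff_0_iff)
qed

lemma Beta_shift_Py_orthogonal:
  assumes "g = 0 \<or> degree g < n"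
  shows "Beta_shift (Py n * g) = 0"
proof -
  have "Beta_shift (Py n * g) = 0" if "g = 0 \<or> degree g < d" "d \<le> n" for d g
    using that
  proof (induction d arbitrary: g)
    case 0
    then show ?case
      by (simp add: Beta_shift_def Beta_y_def)
  next
    case (Suc d)
    define \<rho> where "\<rho> = coeff g d / lead_coeff (gbasis d)"
    define r where "r = g - smult \<rho> (gbasis d)"
    have "degree g \<le> degree (gbasis d)"
      using Suc.prems(1) by (auto simp: degree_gbasis)
    then have "r = 0 \<or> degree r < d"
      using degree_cancel_lead_coeff[of g "gbasis d"] gbasis_neq_0[of d]
      by (simp add: r_def \<rho>_def degree_gbasis)
    then have "Beta_shift (Py n * r) = 0"
      using Suc.IH Suc.prems(2) by simp
    moreover have "Beta_shift (Py n * gbasis d) = 0"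
      using Suc.prems(2) by (simp add: Beta_shift_Py_gbasis_eq_0)
    moreover have "g = r + smult \<rho> (gbasis d)"
      by (simp add: r_def)
    ultimately show ?case
      by (simp add: distrib_left Beta_shift_add Beta_shift_smult)
  qed
  with assms show ?thesis
    by blast
qed

lemma Beta_shift_Py_square_neq_0: "Beta_shift (Py n * Py n) \<noteq> 0"
proof -
  define \<rho> where "\<rho> = coeff (Py n) n / lead_coeff (gbasis n)"
  define r where "r = Py n - smult \<rho> (gbasis n)"
  have "r = 0 \<or> degree r < n"
    using degree_cancel_lead_coeff[of "Py n" "gbasis n"] gbasis_neq_0[of n]
    by (simp add: r_def \<rho>_def degree_gbasis degree_Py)
  then have "Beta_shift (Py n * r) = 0"
    by (rule Beta_shift_Py_orthogonal)
  moreover have "Py n = r + smult \<rho> (gbasis n)"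
    by (simp add: r_def)
  ultimately have "Beta_shift (Py n * Py n) = \<rho> * Beta_shift (Py n * gbasis n)"
    by (metis distrib_left Beta_shift_add Beta_shift_smult mult_smult_right add_0)
  moreover have "\<rho> \<noteq> 0"
    using lead_coeff_Py_neq_0[of n] lead_coeff_gbasis_neq_0[of n] by (simp add: \<rho>_def degree_Py)
  ultimately show ?thesis
    using Beta_shift_Py_gbasis_neq_0 by simp
qed

theorem mainTheorem2:
  shows "is_moment_sequence (\<lambda>n. beta (n + 1) / beta 1) Pfam"
  unfolding is_moment_sequence_def Pfam_eq
proof (intro conjI allI impI)
  show "beta (0 + 1) / beta 1 = 1"
    using beta_1_neq_0 by simp
  show "degree (pcompose (Py n) ysubst) = n" for n
    by (simp add: degree_pcompose degree_Py ysubst_def)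
  show "moment_functional (\<lambda>n. beta (n + 1) / beta 1)
      (pcompose (Py i) ysubst * pcompose (Py j) ysubst) = 0"
    if "i \<noteq> j" for i j
  proof -
    have "Beta_shift (Py i * Py j) = 0"
      using that Beta_shift_Py_orthogonal[of "Py i" j] Beta_shift_Py_orthogonal[of "Py j" i]
      by (cases "i < j") (simp_all add: degree_Py mult.commute)
    then show ?thesis
      unfolding pcompose_mult [symmetric] moment_functional_beta_shift by simp
  qed
  show "moment_functional (\<lambda>n. beta (n + 1) / beta 1)
      (pcompose (Py n) ysubst * pcompose (Py n) ysubst) \<noteq> 0" for n
    unfolding pcompose_mult [symmetric] moment_functional_beta_shift
    using Beta_shift_Py_square_neq_0[of n] beta_1_neq_0 by simp
qed

end
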